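(* Let $G$ be a finite graph, and let $L$ be an induced subgraph of $G$. Let $\mathcal{F}$ be a set of connected subgraphs of $L$. Let $k,\theta\in\mathbb{N}$ and $r,r',\xi,\eta\in\mathbb{R}_{\ge0}$ with $r'\ge r/2$. Let $Z$ be a subset of $V(G)$ with $N_G(V(L))\subseteq Z$ such that $Z$ is $(\xi,\eta)$-centered in $G$. If $L$ does not contain $k$ members of $\mathcal{F}$ pairwise at distance in $G$ at least $r$, then either 1. there exists $Z^*\subseteq V(G)$ with $N_G^{\le r'}[Z]\subseteq Z^*\subseteq V(L)\cup N_G^{\le r'}[Z]$ such that $Z^*$ is $(\xi+3\theta-3,\eta+r')$-centered in $G$ and intersects all members of $\mathcal{F}$, and $Z^*\setminus N_G^{\le r'}[Z]$ is $(3\theta-3,r')$-centered in $G$, or 2. there exists a separation $(A^*,B^* )$ of $L$ of order less than $\theta$ such that each of $A^*-N_G^{\le r'}[V(A^*\cap B^* )]$ and $B^*-N_G^{\le r'}[V(A^*\cap B^* )]$ does not contain $k-1$ members of $\mathcal{F}-N_G^{\le r'}[Z]$ pairwise at distance in $G$ at least $r$, or 3. the set $\mathcal{T}$ consisting of all separations $(A,B)$ of $L$ of order less than $\theta$ such that $A-N_G^{\le r'}[V(A\cap B)]$ does not contain a member of $\mathcal{F}-N_G^{\le r'}[Z]$ but $B-N_G^{\le r'}[V(A\cap B)]$ contains a member of $\mathcal{F}-N_G^{\le r'}[Z]$ is a tangle in $L$ of order $\theta$.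
   Context: $\operatorname{dist}_G$ is graph distance in $G$, extended to sets and subgraphs by minima. $N_G^{\le r}[S]=\{v\in V(G):\operatorname{dist}_G(v,S)\le r\}$, $N_G(S)=N_G^{\le1}[S]\setminus S$. A set $Z$ is $(k,r)$-centered in $G$ if $Z\subseteq N_G^{\le r}[W]$ for some $W$ with $|W|\le k$. For a subgraph $A$ and vertex set $S$, $A-S$ is the subgraph obtained by deleting the vertices of $S\cap V(A)$. For a set $\mathcal{F}$ of subgraphs and $S\subseteq V(G)$, $\mathcal{F}-S$ is the set of members of $\mathcal{F}$ disjoint from $S$; "a subgraph contains a member of $\mathcal{F}$" means some member of $\mathcal{F}$ is a subgraph of it. A separation of a graph $L$ is a pair $(A,B)$ of edge-disjoint subgraphs with $A\cup B=L$; its order is $|V(A)\cap V(B)|$. A tangle in $L$ of order $\theta$ is a set $\mathcal{T}$ of separations of $L$ of order less than $\theta$ such that (T1) for every separation $(A,B)$ of $L$ of order less than $\theta$, $(A,B)\in\mathcal{T}$ or $(B,A)\in\mathcal{T}$; (T2) if $(A_i,B_i)\in\mathcal{T}$ for $i=1,2,3$ then $A_1\cup A_2\cup A_3\ne L$; (T3) if $(A,B)\in\mathcal{T}$ then $V(A)\ne V(L)$. *)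

theory Defs
  imports Main "HOL-Library.Extended_Real"
begin

text \<open>Finite simple graphs, represented as (vertex set, edge set); each edge is a
  2-element set of vertices. Subgraphs are again such pairs.\<close>

type_synonym 'a graph = "'a set \<times> 'a set set"

definition verts :: "'a graph \<Rightarrow> 'a set" where "verts G = fst G"
definition edges :: "'a graph \<Rightarrow> 'a set set" where "edges G = snd G"

definition is_graph :: "'a graph \<Rightarrow> bool" where
  "is_graph G \<longleftrightarrow> (\<forall>e\<in>edges G. \<exists>u v. u \<noteq> v \<and> e = {u, v} \<and> u \<in> verts G \<and> v \<in> verts G)"

definition finite_graph :: "'a graph \<Rightarrow> bool" where
  "finite_graph G \<longleftrightarrow> is_graph G \<and> finite (verts G)"

definition subgraph :: "'a graph \<Rightarrow> 'a graph \<Rightarrow> bool" where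
  "subgraph H G \<longleftrightarrow> is_graph H \<and> verts H \<subseteq> verts G \<and> edges H \<subseteq> edges G"

definition induced_subgraph :: "'a graph \<Rightarrow> 'a graph \<Rightarrow> bool" where
  "induced_subgraph H G \<longleftrightarrow> subgraph H G \<and> edges H = {e \<in> edges G. e \<subseteq> verts H}"

text \<open>A walk in G given as a nonempty vertex list; its length is the number of steps.\<close>
definition walk :: "'a graph \<Rightarrow> 'a list \<Rightarrow> bool" where
  "walk G xs \<longleftrightarrow> xs \<noteq> [] \<and> set xs \<subseteq> verts G \<and>
     (\<forall>i. Suc i < length xs \<longrightarrow> {xs ! i, xs ! Suc i} \<in> edges G)"

text \<open>dist_G(u,v) \<le> r (r real); false when there is no u-v walk (distance infinite).\<close>
definition dist_le :: "'a graph \<Rightarrow> 'a \<Rightarrow> 'a \<Rightarrow> real \<Rightarrow> bool" where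
  "dist_le G u v r \<longleftrightarrow> (\<exists>xs. walk G xs \<and> hd xs = u \<and> last xs = v \<and> real (length xs - 1) \<le> r)"

definition dist_less :: "'a graph \<Rightarrow> 'a \<Rightarrow> 'a \<Rightarrow> real \<Rightarrow> bool" where
  "dist_less G u v r \<longleftrightarrow> (\<exists>xs. walk G xs \<and> hd xs = u \<and> last xs = v \<and> real (length xs - 1) < r)"

text \<open>dist_G(X,Y) \<ge> r for vertex sets (minimum over pairs; infinite if no pair).\<close>
definition set_dist_ge :: "'a graph \<Rightarrow> 'a set \<Rightarrow> 'a set \<Rightarrow> real \<Rightarrow> bool" where
  "set_dist_ge G X Y r \<longleftrightarrow> \<not> (\<exists>u\<in>X. \<exists>v\<in>Y. dist_less G u v r)"

definition ball_nbhd :: "'a graph \<Rightarrow> real \<Rightarrow> 'a set \<Rightarrow> 'a set" where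
  "ball_nbhd G r S = {v \<in> verts G. \<exists>s\<in>S. dist_le G v s r}"

definition open_nbhd :: "'a graph \<Rightarrow> 'a set \<Rightarrow> 'a set" where
  "open_nbhd G S = ball_nbhd G 1 S - S"

definition centered :: "'a graph \<Rightarrow> real \<Rightarrow> real \<Rightarrow> 'a set \<Rightarrow> bool" where
  "centered G k r Z \<longleftrightarrow> (\<exists>W. finite W \<and> W \<subseteq> verts G \<and> real (card W) \<le> k \<and> Z \<subseteq> ball_nbhd G r W)"

text \<open>Connected graphs are nonempty (standard convention).\<close>
definition connected_graph :: "'a graph \<Rightarrow> bool" where
  "connected_graph H \<longleftrightarrow> verts H \<noteq> {} \<and>
     (\<forall>u\<in>verts H. \<forall>v\<in>verts H. \<exists>xs. walk H xs \<and> hd xs = u \<and> last xs = v)"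

definition del_verts :: "'a graph \<Rightarrow> 'a set \<Rightarrow> 'a graph" where
  "del_verts A S = (verts A - S, {e \<in> edges A. e \<inter> S = {}})"

definition fam_minus :: "'a graph set \<Rightarrow> 'a set \<Rightarrow> 'a graph set" where
  "fam_minus F S = {H \<in> F. verts H \<inter> S = {}}"

definition contains_member :: "'a graph \<Rightarrow> 'a graph set \<Rightarrow> bool" where
  "contains_member X F \<longleftrightarrow> (\<exists>H\<in>F. subgraph H X)"

definition contains_far_members :: "'a graph \<Rightarrow> 'a graph \<Rightarrow> 'a graph set \<Rightarrow> nat \<Rightarrow> real \<Rightarrow> bool" where
  "contains_far_members G X F k r \<longleftrightarrow>
     (\<exists>M. M \<subseteq> F \<and> finite M \<and> card M = k \<and> (\<forall>H\<in>M. subgraph H X) \<and>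
        (\<forall>H1\<in>M. \<forall>H2\<in>M. H1 \<noteq> H2 \<longrightarrow> set_dist_ge G (verts H1) (verts H2) r))"

definition graph_union :: "'a graph \<Rightarrow> 'a graph \<Rightarrow> 'a graph" where
  "graph_union A B = (verts A \<union> verts B, edges A \<union> edges B)"

definition separation :: "'a graph \<Rightarrow> 'a graph \<Rightarrow> 'a graph \<Rightarrow> bool" where
  "separation L A B \<longleftrightarrow> subgraph A L \<and> subgraph B L \<and> edges A \<inter> edges B = {} \<and>
     graph_union A B = L"

definition sep_order :: "'a graph \<Rightarrow> 'a graph \<Rightarrow> nat" where
  "sep_order A B = card (verts A \<inter> verts B)"

definition tangle :: "'a graph \<Rightarrow> nat \<Rightarrow> ('a graph \<times> 'a graph) set \<Rightarrow> bool" where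
  "tangle L \<theta> T \<longleftrightarrow>
     (\<forall>(A,B)\<in>T. separation L A B \<and> sep_order A B < \<theta>) \<and>
     (\<forall>A B. separation L A B \<and> sep_order A B < \<theta> \<longrightarrow> (A,B) \<in> T \<or> (B,A) \<in> T) \<and>
     (\<forall>A1 B1 A2 B2 A3 B3. (A1,B1) \<in> T \<and> (A2,B2) \<in> T \<and> (A3,B3) \<in> T \<longrightarrow>
        graph_union (graph_union A1 A2) A3 \<noteq> L) \<and>
     (\<forall>(A,B)\<in>T. verts A \<noteq> verts L)"

end

theory Submission
  imports Defs
begin

(* Orient each separation (A, B) of order < theta towards the side B that, after deleting
   the r'-ball around the separator, still contains a member of F - N[Z].  If this orientation
   is not a tangle, either some separation is oriented neither way or three oriented
   separations cover L.  When no side contains such a member, the r'-ball around the at most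
   3 theta - 3 separator vertices meets every member of F - N[Z], and adding it to N[Z] gives Z*.
   When both sides contain one, neither side can contain k - 1 far members: since N(V(L)) is
   inside Z, a walk of length < r <= 2r' from one trimmed side to the other passes through the
   separator or Z within distance r' of one of its ends, so one member on one side and k - 1
   far members on the other would be k far members in L. *)

lemma walk_Cons_Cons:
  "walk G (x # y # zs) \<longleftrightarrow> x \<in> verts G \<and> {x, y} \<in> edges G \<and> walk G (y # zs)"
  by (auto simp: walk_def nth_Cons split: nat.split)

lemma walk_singleton [simp]: "walk G [x] \<longleftrightarrow> x \<in> verts G"
  by (auto simp: walk_def)

lemma walk_nonempty: "walk G xs \<Longrightarrow> xs \<noteq> []"
  by (simp add: walk_def)

lemma walk_nth_in_verts: "walk G xs \<Longrightarrow> i < length xs \<Longrightarrow> xs ! i \<in> verts G"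
  unfolding walk_def using nth_mem by blast

lemma walk_nth_edge: "walk G xs \<Longrightarrow> Suc i < length xs \<Longrightarrow> {xs ! i, xs ! Suc i} \<in> edges G"
  unfolding walk_def by blast

lemma walk_append:
  "walk G xs \<Longrightarrow> walk G ys \<Longrightarrow> last xs = hd ys \<Longrightarrow> walk G (xs @ tl ys)"
proof (induction xs rule: induct_list012)
  case 1
  then show ?case by (simp add: walk_def)
next
  case (2 x)
  then show ?case by (cases ys) auto
next
  case (3 x y zs)
  then show ?case by (simp add: walk_Cons_Cons)
qed

lemma walk_rev: "walk G xs \<Longrightarrow> walk G (rev xs)"
proof (induction xs rule: induct_list012)
  case (3 x y zs)
  then have "walk G (rev (y # zs) @ tl [y, x])"
    using walk_nth_in_verts[of G "x # y # zs" 1]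
    by (intro walk_append) (auto simp: walk_Cons_Cons insert_commute)
  then show ?case by simp
qed (simp_all add: walk_def)

lemma walk_take: "walk G xs \<Longrightarrow> 0 < n \<Longrightarrow> walk G (take n xs)"
  unfolding walk_def by (auto dest: in_set_takeD)

lemma walk_drop:
  assumes "walk G xs" "n < length xs" shows "walk G (drop n xs)"
  unfolding walk_def
proof (intro conjI allI impI)
  fix i assume "Suc i < length (drop n xs)"
  then show "{drop n xs ! i, drop n xs ! Suc i} \<in> edges G"
    using walk_nth_edge[OF assms(1), of "n + i"] by simp
qed (use assms in \<open>auto simp: walk_def dest: in_set_dropD\<close>)

lemma exists_step_into:
  "xs \<noteq> [] \<Longrightarrow> \<not> P (hd xs) \<Longrightarrow> P (last xs) \<Longrightarrow>
    \<exists>i. Suc i < length xs \<and> \<not> P (xs ! i) \<and> P (xs ! Suc i)"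
proof (induction xs rule: induct_list012)
  case (3 x y zs)
  show ?case
  proof (cases "P y")
    case True
    then show ?thesis using "3.prems"(2) by (intro exI[of _ 0]) simp
  next
    case False
    then obtain i where "Suc i < length (y # zs)" "\<not> P ((y # zs) ! i)" "P ((y # zs) ! Suc i)"
      using "3.IH"(2) "3.prems"(3) by auto
    then show ?thesis by (intro exI[of _ "Suc i"]) simp
  qed
qed simp_all

lemma dist_le_refl: "v \<in> verts G \<Longrightarrow> 0 \<le> r \<Longrightarrow> dist_le G v v r"
  unfolding dist_le_def by (intro exI[of _ "[v]"]) simp

lemma dist_le_sym: "dist_le G u v r \<Longrightarrow> dist_le G v u r"
  unfolding dist_le_def by (metis hd_rev last_rev length_rev walk_rev)

lemma dist_le_mono: "dist_le G u v a \<Longrightarrow> a \<le> b \<Longrightarrow> dist_le G u v b"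
  unfolding dist_le_def by force

lemma dist_le_trans:
  assumes "dist_le G u v a" "dist_le G v w b" shows "dist_le G u w (a + b)"
proof -
  obtain xs ys where xs: "walk G xs" "hd xs = u" "last xs = v" "real (length xs - 1) \<le> a"
    and ys: "walk G ys" "hd ys = v" "last ys = w" "real (length ys - 1) \<le> b"
    using assms unfolding dist_le_def by blast
  have "xs \<noteq> []" "ys \<noteq> []" using xs(1) ys(1) by (simp_all add: walk_nonempty)
  then have "hd (xs @ tl ys) = u" "last (xs @ tl ys) = w"
    "length (xs @ tl ys) - 1 = (length xs - 1) + (length ys - 1)"
    using xs ys by (auto simp: neq_Nil_conv)
  moreover have "walk G (xs @ tl ys)" using walk_append xs ys by metis
  ultimately show ?thesis unfolding dist_le_def using xs(4) ys(4) by (metis add_mono of_nat_add)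
qed

lemma dist_le_edge: "{u, v} \<in> edges G \<Longrightarrow> u \<in> verts G \<Longrightarrow> v \<in> verts G \<Longrightarrow> dist_le G u v 1"
  unfolding dist_le_def by (intro exI[of _ "[u, v]"]) (simp add: walk_Cons_Cons)

lemma dist_le_hd_nth:
  assumes "walk G xs" "i < length xs" shows "dist_le G (hd xs) (xs ! i) i"
proof -
  have "last (take (Suc i) xs) = xs ! i" using assms(2) by (simp add: take_Suc_conv_app_nth)
  then show ?thesis
    unfolding dist_le_def using assms walk_take[OF assms(1), of "Suc i"]
    by (intro exI[of _ "take (Suc i) xs"]) simp
qed

lemma dist_le_nth_last:
  assumes "walk G xs" "i < length xs" shows "dist_le G (xs ! i) (last xs) (length xs - 1 - i)"
  unfolding dist_le_def
  using assms walk_drop[OF assms]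
  by (intro exI[of _ "drop i xs"]) (auto simp: hd_drop_conv_nth)

lemma walk_near_an_end:
  assumes "walk G xs" "i < length xs" "real (length xs - 1) \<le> 2 * r"
  shows "dist_le G (hd xs) (xs ! i) r \<or> dist_le G (last xs) (xs ! i) r"
proof (cases "real i \<le> r")
  case True
  then show ?thesis by (blast intro: dist_le_mono[OF dist_le_hd_nth[OF assms(1,2)]])
next
  case False
  then have "real (length xs - 1 - i) \<le> r" using assms(2,3) by linarith
  then have "dist_le G (xs ! i) (last xs) r"
    by (rule dist_le_mono[OF dist_le_nth_last[OF assms(1,2)]])
  then show ?thesis using dist_le_sym by fast
qed

lemma subset_ball_nbhd: "S \<subseteq> verts G \<Longrightarrow> 0 \<le> r \<Longrightarrow> S \<subseteq> ball_nbhd G r S"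
  unfolding ball_nbhd_def by (auto intro: dist_le_refl)

lemma ball_nbhd_mono: "S \<subseteq> T \<Longrightarrow> ball_nbhd G r S \<subseteq> ball_nbhd G r T"
  unfolding ball_nbhd_def by blast

lemma ball_nbhd_mono_radius:
  assumes "a \<le> b" shows "ball_nbhd G a S \<subseteq> ball_nbhd G b S"
  unfolding ball_nbhd_def by (auto intro: dist_le_mono[OF _ assms])

lemma ball_nbhd_Un: "ball_nbhd G r (S \<union> T) = ball_nbhd G r S \<union> ball_nbhd G r T"
  unfolding ball_nbhd_def by auto

lemma ball_nbhd_ball_nbhd_subset:
  assumes "Z \<subseteq> ball_nbhd G e W" shows "ball_nbhd G r Z \<subseteq> ball_nbhd G (e + r) W"
proof
  fix x assume "x \<in> ball_nbhd G r Z"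
  then obtain z w where "x \<in> verts G" "dist_le G x z r" "w \<in> W" "dist_le G z w e"
    using assms unfolding ball_nbhd_def by blast
  moreover from this have "dist_le G x w (e + r)"
    using dist_le_trans[of G x z r w e] by (simp add: add.commute)
  ultimately show "x \<in> ball_nbhd G (e + r) W"
    unfolding ball_nbhd_def by blast
qed

lemma centered_subset: "centered G k r X \<Longrightarrow> Y \<subseteq> X \<Longrightarrow> centered G k r Y"
  unfolding centered_def by blast

lemma centered_mono_radius: "centered G k a X \<Longrightarrow> a \<le> b \<Longrightarrow> centered G k b X"
  unfolding centered_def by (meson ball_nbhd_mono_radius order_trans)

lemma centered_ball_nbhd: "centered G k e Z \<Longrightarrow> centered G k (e + r) (ball_nbhd G r Z)"
  unfolding centered_def by (meson ball_nbhd_ball_nbhd_subset)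

lemma centered_ball_nbhd_self:
  "finite W \<Longrightarrow> W \<subseteq> verts G \<Longrightarrow> real (card W) \<le> k \<Longrightarrow> centered G k r (ball_nbhd G r W)"
  unfolding centered_def by blast

lemma centered_Un:
  assumes "centered G a r X" "centered G b r Y" shows "centered G (a + b) r (X \<union> Y)"
proof -
  obtain V W where V: "finite V" "V \<subseteq> verts G" "real (card V) \<le> a" "X \<subseteq> ball_nbhd G r V"
    and W: "finite W" "W \<subseteq> verts G" "real (card W) \<le> b" "Y \<subseteq> ball_nbhd G r W"
    using assms unfolding centered_def by blast
  have "card (V \<union> W) \<le> card V + card W"
    by (rule card_Un_le)
  then have "real (card (V \<union> W)) \<le> a + b"
    using V(3) W(3) by linarith
  moreover have "X \<union> Y \<subseteq> ball_nbhd G r (V \<union> W)"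
    using V(4) W(4) ball_nbhd_Un[of G r V W] by blast
  ultimately show ?thesis
    unfolding centered_def using V(1,2) W(1,2) by blast
qed

lemma edge_endpoint_in_verts: "is_graph G \<Longrightarrow> e \<in> edges G \<Longrightarrow> x \<in> e \<Longrightarrow> x \<in> verts G"
  unfolding is_graph_def by auto

lemma verts_del_verts [simp]: "verts (del_verts A S) = verts A - S"
  by (simp add: del_verts_def verts_def)

lemma edges_del_verts [simp]: "edges (del_verts A S) = {e \<in> edges A. e \<inter> S = {}}"
  by (simp add: del_verts_def edges_def)

lemma verts_graph_union [simp]: "verts (graph_union A B) = verts A \<union> verts B"
  by (simp add: graph_union_def verts_def)

lemma separation_verts: "separation L A B \<Longrightarrow> verts L = verts A \<union> verts B"
  unfolding separation_def graph_union_def by (auto simp: verts_def)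

lemma separation_edges: "separation L A B \<Longrightarrow> edges L = edges A \<union> edges B"
  unfolding separation_def graph_union_def by (auto simp: edges_def)

lemma separation_is_graph: "separation L A B \<Longrightarrow> is_graph A \<and> is_graph B"
  unfolding separation_def subgraph_def by blast

lemma separation_commute: "separation L A B \<Longrightarrow> separation L B A"
  unfolding separation_def graph_union_def by (simp add: Un_commute Int_commute)

lemma sep_order_commute: "sep_order B A = sep_order A B"
  unfolding sep_order_def by (simp add: Int_commute)

lemma ball_nbhd_subset_Un_ball_nbhd_open_nbhd:
  assumes "S \<subseteq> X" "open_nbhd G X \<subseteq> Z"
  shows "ball_nbhd G r S \<subseteq> X \<union> ball_nbhd G r Z"
proof
  fix x assume x: "x \<in> ball_nbhd G r S"
  show "x \<in> X \<union> ball_nbhd G r Z"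
  proof (cases "x \<in> X")
    case False
    obtain s xs where "s \<in> S" and xs: "walk G xs" "hd xs = x" "last xs = s" "real (length xs - 1) \<le> r"
      using x unfolding ball_nbhd_def dist_le_def by blast
    then obtain i where i: "Suc i < length xs" "xs ! i \<notin> X" "xs ! Suc i \<in> X"
      using exists_step_into[of xs "\<lambda>v. v \<in> X"] walk_nonempty[OF xs(1)] False assms(1) by auto
    have "dist_le G (xs ! i) (xs ! Suc i) 1"
      using dist_le_edge[OF walk_nth_edge[OF xs(1) i(1)]] walk_nth_in_verts[OF xs(1)] i(1) by simp
    then have "xs ! i \<in> Z"
      using assms(2) i walk_nth_in_verts[OF xs(1), of i] unfolding open_nbhd_def ball_nbhd_def by auto
    moreover have "dist_le G x (xs ! i) r"
      using dist_le_mono[OF dist_le_hd_nth[OF xs(1), of i]] xs(2,4) i(1) by simp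
    moreover have "x \<in> verts G" using x unfolding ball_nbhd_def by simp
    ultimately show ?thesis unfolding ball_nbhd_def by auto
  qed simp
qed

lemma induced_separation_edge_leaving_side:
  assumes "induced_subgraph L G" "separation L A B" "{x, y} \<in> edges G" "y \<in> verts G"
    and x: "x \<in> verts A - verts B" and y: "y \<notin> verts A - verts B"
  shows "y \<in> verts A \<inter> verts B \<union> open_nbhd G (verts L)"
proof (cases "y \<in> verts L")
  case True
  then have "{x, y} \<in> edges L"
    using assms(1,3) x separation_verts[OF assms(2)] unfolding induced_subgraph_def by auto
  then have "{x, y} \<in> edges A \<or> {x, y} \<in> edges B" using separation_edges[OF assms(2)] by auto
  then have "y \<in> verts A \<or> x \<in> verts B"
    using edge_endpoint_in_verts[of A "{x, y}"] edge_endpoint_in_verts[of B "{x, y}"]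
      separation_is_graph[OF assms(2)] by auto
  then show ?thesis using x y by auto
next
  case False
  have "verts L \<subseteq> verts G" using assms(1) unfolding induced_subgraph_def subgraph_def by simp
  then have "dist_le G y x 1"
    using dist_le_edge[of y x G] assms(3,4) x separation_verts[OF assms(2)] by (auto simp: insert_commute)
  then show ?thesis
    using False assms(4) x separation_verts[OF assms(2)] unfolding open_nbhd_def ball_nbhd_def by auto
qed

lemma separation_sides_set_dist_ge:
  assumes "induced_subgraph L G" "separation L A B" "open_nbhd G (verts L) \<subseteq> Z"
    "0 \<le> r'" "r \<le> 2 * r'"
    and X: "X \<subseteq> verts A - ball_nbhd G r' (verts A \<inter> verts B \<union> Z)"
    and Y: "Y \<subseteq> verts B - ball_nbhd G r' (verts A \<inter> verts B \<union> Z)"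
  shows "set_dist_ge G X Y r"
  unfolding set_dist_ge_def
proof (intro notI, elim bexE)
  let ?S = "verts A \<inter> verts B"
  fix u v assume "u \<in> X" "v \<in> Y" "dist_less G u v r"
  then obtain xs where xs: "walk G xs" "hd xs = u" "last xs = v" "real (length xs - 1) < r"
    unfolding dist_less_def by blast
  have LG: "verts L \<subseteq> verts G" using assms(1) unfolding induced_subgraph_def subgraph_def by simp
  have "?S \<subseteq> ball_nbhd G r' (?S \<union> Z)"
    using subset_ball_nbhd[of ?S G r'] ball_nbhd_mono[of ?S "?S \<union> Z" G r'] LG assms(4)
      separation_verts[OF assms(2)] by auto
  then have "hd xs \<in> verts A - verts B" "last xs \<notin> verts A - verts B"
    using X Y \<open>u \<in> X\<close> \<open>v \<in> Y\<close> xs(2,3) by auto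
  then obtain i where i: "Suc i < length xs"
      "xs ! i \<in> verts A - verts B" "xs ! Suc i \<notin> verts A - verts B"
    using exists_step_into[of xs "\<lambda>w. w \<notin> verts A - verts B"] walk_nonempty[OF xs(1)] by auto
  have "xs ! Suc i \<in> ?S \<union> open_nbhd G (verts L)"
    using induced_separation_edge_leaving_side[OF assms(1,2) walk_nth_edge[OF xs(1) i(1)]
        walk_nth_in_verts[OF xs(1) i(1)] i(2,3)] .
  then have near: "xs ! Suc i \<in> ?S \<union> Z" using assms(3) by blast
  have "dist_le G u (xs ! Suc i) r' \<or> dist_le G v (xs ! Suc i) r'"
    using walk_near_an_end[OF xs(1) i(1), of r'] xs(2-4) assms(5) by simp
  moreover have "u \<in> verts G" "v \<in> verts G"
    using X Y \<open>u \<in> X\<close> \<open>v \<in> Y\<close> LG separation_verts[OF assms(2)] by auto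
  ultimately show False
    using near X Y \<open>u \<in> X\<close> \<open>v \<in> Y\<close> unfolding ball_nbhd_def by auto
qed

lemma connected_graph_verts_subset:
  assumes "connected_graph H" "h \<in> verts H" "h \<in> X"
    and closed: "\<And>x y. {x, y} \<in> edges H \<Longrightarrow> x \<in> X \<Longrightarrow> y \<in> X"
  shows "verts H \<subseteq> X"
proof
  fix v assume "v \<in> verts H"
  then obtain xs where xs: "walk H xs" "hd xs = h" "last xs = v"
    using assms(1,2) unfolding connected_graph_def by blast
  show "v \<in> X"
  proof (rule ccontr)
    assume "v \<notin> X"
    then obtain i where "Suc i < length xs" "xs ! i \<in> X" "xs ! Suc i \<notin> X"
      using exists_step_into[of xs "\<lambda>w. w \<notin> X"] walk_nonempty[OF xs(1)] xs(2,3) assms(3) by auto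
    then show False using closed walk_nth_edge[OF xs(1)] by blast
  qed
qed

lemma connected_subgraph_in_side:
  assumes sep: "separation L A B" and "subgraph H L" "connected_graph H"
    and disj: "verts H \<inter> (verts A \<inter> verts B) = {}" and h: "h \<in> verts H" "h \<in> verts A"
  shows "subgraph H A"
proof -
  have H: "is_graph H" "edges H \<subseteq> edges A \<union> edges B"
    using assms(2) separation_edges[OF sep] unfolding subgraph_def by auto
  have AB: "is_graph A" "is_graph B" using separation_is_graph[OF sep] by auto
  have "verts H \<subseteq> verts A"
  proof (rule connected_graph_verts_subset[OF assms(3) h])
    fix x y assume e: "{x, y} \<in> edges H" and "x \<in> verts A"
    have "x \<in> verts H" using edge_endpoint_in_verts[OF H(1) e] by simp
    then have "x \<notin> verts B" using disj \<open>x \<in> verts A\<close> by blast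
    then have "{x, y} \<in> edges A" using e H(2) edge_endpoint_in_verts[OF AB(2), of "{x, y}" x] by auto
    then show "y \<in> verts A" using edge_endpoint_in_verts[OF AB(1)] by simp
  qed
  moreover have "edges H \<subseteq> edges A"
  proof
    fix e assume e: "e \<in> edges H"
    then obtain x y where "e = {x, y}" "x \<in> verts H" using H(1) unfolding is_graph_def by auto
    then have "x \<notin> verts B" using disj \<open>verts H \<subseteq> verts A\<close> by blast
    then show "e \<in> edges A" using e H(2) edge_endpoint_in_verts[OF AB(2), of e x] \<open>e = {x, y}\<close> by auto
  qed
  ultimately show ?thesis using H(1) unfolding subgraph_def by simp
qed

lemma subgraph_del_verts:
  assumes "subgraph H A" "verts H \<inter> N = {}" shows "subgraph H (del_verts A N)"
  using assms edge_endpoint_in_verts[of H] unfolding subgraph_def by auto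

lemma connected_subgraph_avoiding_separator:
  assumes sep: "separation L A B" and "subgraph H L" "connected_graph H"
    and "verts A \<inter> verts B \<subseteq> N" "verts H \<inter> N = {}"
  shows "subgraph H (del_verts A N) \<or> subgraph H (del_verts B N)"
proof -
  obtain h where h: "h \<in> verts H" using assms(3) unfolding connected_graph_def by blast
  have disj: "verts H \<inter> (verts A \<inter> verts B) = {}" using assms(4,5) by blast
  have "h \<in> verts A \<or> h \<in> verts B"
    using h assms(2) separation_verts[OF sep] unfolding subgraph_def by auto
  then have "subgraph H A \<or> subgraph H B"
    using connected_subgraph_in_side[OF sep assms(2,3) disj h]
      connected_subgraph_in_side[OF separation_commute[OF sep] assms(2,3) _ h] disj by blast
  then show ?thesis using subgraph_del_verts assms(5) by blast
qed

lemma set_dist_ge_commute: "set_dist_ge G X Y r \<Longrightarrow> set_dist_ge G Y X r"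
  unfolding set_dist_ge_def dist_less_def by (metis hd_rev last_rev length_rev walk_rev)

lemma contains_far_members_0: "contains_far_members G X F 0 r"
  unfolding contains_far_members_def by (intro exI[of _ "{}"]) simp

lemma hitting_set_extension:
  assumes "finite (verts G)" "X \<subseteq> verts G" "S \<subseteq> X" "open_nbhd G X \<subseteq> Z"
    and "0 \<le> \<eta>" "centered G \<xi> \<eta> Z" "real (card S) \<le> c"
    and hit: "\<forall>H\<in>fam_minus F (ball_nbhd G r' Z). verts H \<inter> ball_nbhd G r' S \<noteq> {}"
  shows "\<exists>Zs. ball_nbhd G r' Z \<subseteq> Zs \<and> Zs \<subseteq> X \<union> ball_nbhd G r' Z \<and>
            centered G (\<xi> + c) (\<eta> + r') Zs \<and> (\<forall>H\<in>F. Zs \<inter> verts H \<noteq> {}) \<and>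
            centered G c r' (Zs - ball_nbhd G r' Z)"
proof (intro exI conjI)
  let ?Zs = "ball_nbhd G r' Z \<union> ball_nbhd G r' S"
  have S: "S \<subseteq> verts G" "finite S" using assms(2,3) finite_subset[OF _ assms(1)] by auto
  have cS: "centered G c r' (ball_nbhd G r' S)" using centered_ball_nbhd_self[OF S(2,1) assms(7)] .
  show "ball_nbhd G r' Z \<subseteq> ?Zs" by blast
  show "?Zs \<subseteq> X \<union> ball_nbhd G r' Z"
    using ball_nbhd_subset_Un_ball_nbhd_open_nbhd[OF assms(3,4)] by blast
  show "centered G (\<xi> + c) (\<eta> + r') ?Zs"
    using centered_Un[OF centered_ball_nbhd[OF assms(6)] centered_mono_radius[OF cS]] assms(5) by simp
  show "\<forall>H\<in>F. ?Zs \<inter> verts H \<noteq> {}" using hit unfolding fam_minus_def by auto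
  show "centered G c r' (?Zs - ball_nbhd G r' Z)" by (rule centered_subset[OF cS]) auto
qed

lemma not_tangle_cases:
  assumes "\<not> tangle L \<theta> T" "\<forall>(A, B)\<in>T. separation L A B \<and> sep_order A B < \<theta>"
    and "\<forall>(A, B)\<in>T. verts A \<noteq> verts L"
  obtains A B where "separation L A B" "sep_order A B < \<theta>" "(A, B) \<notin> T" "(B, A) \<notin> T"
    | A1 B1 A2 B2 A3 B3 where "(A1, B1) \<in> T" "(A2, B2) \<in> T" "(A3, B3) \<in> T"
        "graph_union (graph_union A1 A2) A3 = L"
  using assms unfolding tangle_def by blast

locale far_members_setting =
  fixes G L :: "'a graph" and F :: "'a graph set" and r r' :: real and Z :: "'a set" and \<theta> :: nat
  assumes induced: "induced_subgraph L G"
    and F_connected: "\<forall>H\<in>F. subgraph H L \<and> connected_graph H"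
    and r'_nonneg: "0 \<le> r'" and r_le: "r' \<ge> r / 2"
    and Z_boundary: "open_nbhd G (verts L) \<subseteq> Z"
begin

abbreviation FZ where "FZ \<equiv> fam_minus F (ball_nbhd G r' Z)"

abbreviation sep_nbhd where "sep_nbhd A B \<equiv> ball_nbhd G r' (verts A \<inter> verts B)"

abbreviation T where
  "T \<equiv> {(A, B). separation L A B \<and> sep_order A B < \<theta> \<and>
     \<not> contains_member (del_verts A (sep_nbhd A B)) FZ \<and>
     contains_member (del_verts B (sep_nbhd A B)) FZ}"

lemma verts_L_subset: "verts L \<subseteq> verts G"
  using induced unfolding induced_subgraph_def subgraph_def by simp

lemma separator_subset_sep_nbhd:
  assumes "separation L A B" shows "verts A \<inter> verts B \<subseteq> sep_nbhd A B"
proof (rule subset_ball_nbhd[OF _ r'_nonneg])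
  show "verts A \<inter> verts B \<subseteq> verts G" using separation_verts[OF assms] verts_L_subset by auto
qed

lemma FZ_in_trimmed_side:
  assumes "separation L A B" "H \<in> FZ" "verts H \<inter> sep_nbhd A B = {}"
  shows "subgraph H (del_verts A (sep_nbhd A B)) \<or> subgraph H (del_verts B (sep_nbhd A B))"
proof (rule connected_subgraph_avoiding_separator[OF assms(1) _ _ _ assms(3)])
  show "verts A \<inter> verts B \<subseteq> sep_nbhd A B" using separator_subset_sep_nbhd[OF assms(1)] .
next
  show "subgraph H L" "connected_graph H" using assms(2) F_connected unfolding fam_minus_def by auto
qed

lemma FZ_verts_nonempty: "H \<in> FZ \<Longrightarrow> verts H \<noteq> {}"
  using F_connected unfolding fam_minus_def connected_graph_def by auto

lemma far_members_extend:
  assumes sep: "separation L A B"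
    and far: "contains_far_members G (del_verts A (sep_nbhd A B)) FZ m r"
    and member: "contains_member (del_verts B (sep_nbhd A B)) FZ"
  shows "contains_far_members G L F (Suc m) r"
proof -
  let ?N = "ball_nbhd G r' (verts A \<inter> verts B \<union> Z)"
  obtain M where M: "M \<subseteq> FZ" "finite M" "card M = m"
    "\<forall>H\<in>M. subgraph H (del_verts A (sep_nbhd A B))"
    "\<forall>H1\<in>M. \<forall>H2\<in>M. H1 \<noteq> H2 \<longrightarrow> set_dist_ge G (verts H1) (verts H2) r"
    using far unfolding contains_far_members_def by blast
  obtain H' where H': "H' \<in> FZ" "subgraph H' (del_verts B (sep_nbhd A B))"
    using member unfolding contains_member_def by blast
  have M_side: "verts H \<subseteq> verts A - ?N" if "H \<in> M" for H
    using that M(1,4) ball_nbhd_Un[of G r' "verts A \<inter> verts B" Z]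
    unfolding subgraph_def fam_minus_def by auto
  have H'_side: "verts H' \<subseteq> verts B - ?N"
    using H' ball_nbhd_Un[of G r' "verts A \<inter> verts B" Z] unfolding subgraph_def fam_minus_def by auto
  have apart: "set_dist_ge G (verts H) (verts H') r" if "H \<in> M" for H
    using separation_sides_set_dist_ge[OF induced sep Z_boundary r'_nonneg _ M_side[OF that] H'_side]
      r_le by simp
  have "H' \<notin> M"
  proof
    assume "H' \<in> M"
    then have "verts H' \<subseteq> verts A \<inter> verts B - ?N" using M_side H'_side by blast
    moreover have "verts A \<inter> verts B \<subseteq> ?N"
      using separator_subset_sep_nbhd[OF sep] ball_nbhd_Un[of G r' "verts A \<inter> verts B" Z] by auto
    ultimately show False using FZ_verts_nonempty[OF H'(1)] by blast
  qed
  show ?thesis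
    unfolding contains_far_members_def
  proof (intro exI[of _ "insert H' M"] conjI ballI impI)
    show "insert H' M \<subseteq> F" "finite (insert H' M)" "card (insert H' M) = Suc m"
      using M(1-3) H'(1) \<open>H' \<notin> M\<close> unfolding fam_minus_def by auto
    show "subgraph H L" if "H \<in> insert H' M" for H
      using that \<open>insert H' M \<subseteq> F\<close> F_connected by auto
    show "set_dist_ge G (verts H1) (verts H2) r"
      if "H1 \<in> insert H' M" "H2 \<in> insert H' M" "H1 \<noteq> H2" for H1 H2
      using that M(5) apart[of H1] set_dist_ge_commute[OF apart[of H2]] by auto
  qed
qed

lemma trimmed_side_lacks_far_members:
  assumes "\<not> contains_far_members G L F k r" "separation L A B"
    and "contains_member (del_verts B (sep_nbhd A B)) FZ"
  shows "\<not> contains_far_members G (del_verts A (sep_nbhd A B)) FZ (k - 1) r"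
proof -
  have "k = Suc (k - 1)" using assms(1) contains_far_members_0[of G L F r] by (cases k) auto
  then show ?thesis using far_members_extend[OF assms(2) _ assms(3)] assms(1) by metis
qed

lemma T_proper: "(A, B) \<in> T \<Longrightarrow> verts A \<noteq> verts L"
proof
  assume AB: "(A, B) \<in> T" and "verts A = verts L"
  then have "verts B \<subseteq> sep_nbhd A B"
    using separation_verts separator_subset_sep_nbhd by blast
  moreover obtain H where "H \<in> FZ" "subgraph H (del_verts B (sep_nbhd A B))"
    using AB unfolding contains_member_def by blast
  ultimately show False using FZ_verts_nonempty[of H] unfolding subgraph_def by auto
qed

lemma FZ_disjoint_small_side:
  assumes "(A, B) \<in> T" "H \<in> FZ" "verts H \<inter> sep_nbhd A B = {}"
  shows "verts H \<inter> verts A = {}"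
proof -
  have sep: "separation L A B" using assms(1) by simp
  have "\<not> subgraph H (del_verts A (sep_nbhd A B))"
    using assms(1,2) unfolding contains_member_def by auto
  then have "verts H \<subseteq> verts B - sep_nbhd A B"
    using FZ_in_trimmed_side[OF sep assms(2,3)] unfolding subgraph_def by auto
  then show ?thesis using separator_subset_sep_nbhd[OF sep] by auto
qed

lemma unoriented_separation_hits_or_balanced:
  assumes "\<not> contains_far_members G L F k r" "separation L A B" "sep_order A B < \<theta>"
    and "(A, B) \<notin> T" "(B, A) \<notin> T"
  shows "(\<forall>H\<in>FZ. verts H \<inter> sep_nbhd A B \<noteq> {}) \<or>
    (\<not> contains_far_members G (del_verts A (sep_nbhd A B)) FZ (k - 1) r \<and>
     \<not> contains_far_members G (del_verts B (sep_nbhd A B)) FZ (k - 1) r)"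
proof -
  have sep': "separation L B A" using separation_commute[OF assms(2)] .
  have nbhd': "sep_nbhd B A = sep_nbhd A B" by (simp add: Int_commute)
  have same: "contains_member (del_verts A (sep_nbhd A B)) FZ \<longleftrightarrow>
      contains_member (del_verts B (sep_nbhd A B)) FZ"
    using assms(2-5) sep' sep_order_commute[of B A] nbhd' by auto
  show ?thesis
  proof (cases "contains_member (del_verts A (sep_nbhd A B)) FZ")
    case True
    then show ?thesis
      using trimmed_side_lacks_far_members[OF assms(1,2)] trimmed_side_lacks_far_members[OF assms(1) sep']
        same nbhd' by simp
  next
    case False
    then show ?thesis
      using FZ_in_trimmed_side[OF assms(2)] same unfolding contains_member_def by blast
  qed
qed

lemma covering_separators_hit_FZ:
  assumes "(A1, B1) \<in> T" "(A2, B2) \<in> T" "(A3, B3) \<in> T" "graph_union (graph_union A1 A2) A3 = L"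
    and "H \<in> FZ"
  shows "verts H \<inter>
    ball_nbhd G r' (verts A1 \<inter> verts B1 \<union> verts A2 \<inter> verts B2 \<union> verts A3 \<inter> verts B3) \<noteq> {}"
    (is "_ \<inter> ball_nbhd G r' ?S \<noteq> {}")
proof
  assume avoid: "verts H \<inter> ball_nbhd G r' ?S = {}"
  have disj: "verts H \<inter> verts A = {}" if "(A, B) \<in> T" "verts A \<inter> verts B \<subseteq> ?S" for A B
  proof (rule FZ_disjoint_small_side[OF that(1) assms(5)])
    show "verts H \<inter> sep_nbhd A B = {}" using avoid ball_nbhd_mono[OF that(2), of G r'] by auto
  qed
  have "verts H \<subseteq> verts L"
    using assms(5) F_connected unfolding fam_minus_def subgraph_def by auto
  also have "verts L = verts A1 \<union> verts A2 \<union> verts A3"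
    using assms(4) by force
  finally have "verts H \<subseteq> verts A1 \<union> verts A2 \<union> verts A3" .
  then show False
    using disj[OF assms(1)] disj[OF assms(2)] disj[OF assms(3)] FZ_verts_nonempty[OF assms(5)] by auto
qed

lemma hitting_set_or_balanced_separation_or_tangle:
  assumes no_far: "\<not> contains_far_members G L F k r"
  shows "(\<exists>S. S \<subseteq> verts L \<and> real (card S) \<le> 3 * real \<theta> - 3 \<and>
            (\<forall>H\<in>FZ. verts H \<inter> ball_nbhd G r' S \<noteq> {}))
    \<or> (\<exists>A B. separation L A B \<and> sep_order A B < \<theta> \<and>
         \<not> contains_far_members G (del_verts A (sep_nbhd A B)) FZ (k - 1) r \<and>
         \<not> contains_far_members G (del_verts B (sep_nbhd A B)) FZ (k - 1) r)
    \<or> tangle L \<theta> T"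
proof (cases "tangle L \<theta> T")
  case False
  moreover have "\<forall>(A, B)\<in>T. separation L A B \<and> sep_order A B < \<theta>" by auto
  moreover have "\<forall>(A, B)\<in>T. verts A \<noteq> verts L" using T_proper by fast
  ultimately show ?thesis
  proof (cases rule: not_tangle_cases[case_names unoriented covering])
    case (unoriented A B)
    have "verts A \<inter> verts B \<subseteq> verts L" using separation_verts[OF unoriented(1)] by auto
    moreover have "real (card (verts A \<inter> verts B)) \<le> 3 * real \<theta> - 3"
      using unoriented(2) unfolding sep_order_def by linarith
    ultimately show ?thesis using unoriented_separation_hits_or_balanced[OF no_far unoriented] unoriented(1,2) by blast
  next
    case (covering A1 B1 A2 B2 A3 B3)
    let ?S = "verts A1 \<inter> verts B1 \<union> verts A2 \<inter> verts B2 \<union> verts A3 \<inter> verts B3"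
    have "?S \<subseteq> verts L"
      using covering(1-3) separation_verts[of L A1 B1] separation_verts[of L A2 B2]
        separation_verts[of L A3 B3] by auto
    moreover have "card ?S \<le> card (verts A1 \<inter> verts B1) + card (verts A2 \<inter> verts B2)
        + card (verts A3 \<inter> verts B3)"
      by (meson add_le_mono card_Un_le le_trans order_refl)
    then have "real (card ?S) \<le> 3 * real \<theta> - 3"
      using covering(1-3) unfolding sep_order_def by simp
    ultimately show ?thesis using covering_separators_hit_FZ[OF covering] by blast
  qed
qed simp

end

theorem lemma3p1:
  fixes G L :: "'a graph" and F :: "'a graph set" and k \<theta> :: nat
    and r r' \<xi> \<eta> :: real and Z :: "'a set"
  assumes "finite_graph G"
    and "induced_subgraph L G"
    and "\<forall>H\<in>F. subgraph H L \<and> connected_graph H"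
    and "r \<ge> 0" "r' \<ge> 0" "\<xi> \<ge> 0" "\<eta> \<ge> 0" "r' \<ge> r / 2"
    and "Z \<subseteq> verts G" "open_nbhd G (verts L) \<subseteq> Z" "centered G \<xi> \<eta> Z"
    and "\<not> contains_far_members G L F k r"
  shows "(\<exists>Zs. ball_nbhd G r' Z \<subseteq> Zs \<and> Zs \<subseteq> verts L \<union> ball_nbhd G r' Z \<and>
            centered G (\<xi> + 3 * real \<theta> - 3) (\<eta> + r') Zs \<and>
            (\<forall>H\<in>F. Zs \<inter> verts H \<noteq> {}) \<and>
            centered G (3 * real \<theta> - 3) r' (Zs - ball_nbhd G r' Z))
       \<or> (\<exists>A B. separation L A B \<and> sep_order A B < \<theta> \<and>
            \<not> contains_far_members G (del_verts A (ball_nbhd G r' (verts A \<inter> verts B)))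
                 (fam_minus F (ball_nbhd G r' Z)) (k - 1) r \<and>
            \<not> contains_far_members G (del_verts B (ball_nbhd G r' (verts A \<inter> verts B)))
                 (fam_minus F (ball_nbhd G r' Z)) (k - 1) r)
       \<or> tangle L \<theta> {(A, B). separation L A B \<and> sep_order A B < \<theta> \<and>
            \<not> contains_member (del_verts A (ball_nbhd G r' (verts A \<inter> verts B))) (fam_minus F (ball_nbhd G r' Z)) \<and>
            contains_member (del_verts B (ball_nbhd G r' (verts A \<inter> verts B))) (fam_minus F (ball_nbhd G r' Z))}"
proof -
  interpret far_members_setting G L F r r' Z \<theta>
    using assms(2,3,5,8,10) by unfold_locales
  have "finite (verts G)" using assms(1) unfolding finite_graph_def by simp
  note hitting_outcome = hitting_set_extension[OF this verts_L_subset _ assms(10,7,11)]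
  show ?thesis
    using hitting_set_or_balanced_separation_or_tangle[OF assms(12)]
  proof (elim disjE exE conjE)
    fix S assume "S \<subseteq> verts L" "real (card S) \<le> 3 * real \<theta> - 3"
      "\<forall>H\<in>FZ. verts H \<inter> ball_nbhd G r' S \<noteq> {}"
    from hitting_outcome[OF this] show ?thesis unfolding add_diff_eq by blast
  qed blast+
qed

end
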